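(* Let $(a_{ijk})_{i,j\le n,k\le m}$ be real numbers, $S\subset\mathbb{R}^m$ a nonempty finite set and $\varepsilon>0$. Suppose that for each $x\in\mathbb{R}^n$ a set $S_{x,\varepsilon}\subset S$ is chosen (measurably in $x$) such that for every $t\in S$ there is $t'\in S_{x,\varepsilon}$ with $\alpha_A(x\otimes(t-t'))\le\varepsilon\beta_{A,S}(x)$, and let $\mu_{\varepsilon,S}$ be the measure on $\mathbb{R}^n\times S$ given by $\mu_{\varepsilon,S}(D)=\int_{\mathbb{R}^n}\sum_{t\in S_{x,\varepsilon}}\delta_{(x,t)}(D)\,d\gamma_{n,\varepsilon}(x)$. Then for every $(x,t)\in B_2^n\times S$, \[ \mu_{\varepsilon,S} \big(B((x,t),d_A,r(\varepsilon))\big) \geq \frac{1}{2}\exp(-\varepsilon^{-2}/2), \] where $r(\varepsilon)=4\varepsilon^2\mathbb{E}\beta_{A,S}(G_n)+\varepsilon\beta_{A,S}(x)+4\varepsilon\mathbb{E}\alpha_A(G_n\otimes t)$.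
   Context: $G_n$ is a standard Gaussian vector in $\mathbb{R}^n$ and $\gamma_{n,\varepsilon}$ is the distribution of $\varepsilon G_n$; $B_2^n$ is the Euclidean unit ball; $\delta_{(x,t)}$ is the Dirac mass. For $x\in\mathbb{R}^n,t\in\mathbb{R}^m$, $x\otimes t=(x_jt_k)_{j,k}\in\mathbb{R}^{nm}$; for $y=(y_{jk})\in\mathbb{R}^{nm}$, $\alpha_A(y)=\big(\sum_{i}(\sum_{j,k}a_{ijk}y_{jk})^2\big)^{1/2}$. With $g_1,\dots,g_n$ i.i.d. $\mathcal N(0,1)$, $\beta_{A,S}(x)=\mathbb{E}\sup_{t\in S}|\sum_{i,j,k}a_{ijk}g_ix_jt_k|$. The distance is $d_A((x,t),(x',t'))=\alpha_A(x\otimes t-x'\otimes t')$, and $B((x,t),d_A,r)=\{(x',t')\in\mathbb{R}^n\times S:\alpha_A(x\otimes t-x'\otimes t')\le r\}$. *)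

theory Defs
  imports "HOL-Probability.Probability"
begin

text \<open>Coefficient arrays a_{ijk}, i,j indexed by the finite type 'n (so i,j \<le> n),
 k indexed by the finite type 'm.\<close>

definition gauss_density :: "real \<Rightarrow> real^'n \<Rightarrow> real" where
  "gauss_density eps x =
     (1 / (sqrt (2 * pi) * eps)) ^ CARD('n) * exp (- ((norm x)^2) / (2 * eps^2))"

definition gauss_measure :: "real \<Rightarrow> (real^'n) measure" where
  "gauss_measure eps = density lborel (\<lambda>x. ennreal (gauss_density eps x))"

definition tensor :: "real^'n \<Rightarrow> real^'m \<Rightarrow> ('n \<Rightarrow> 'm \<Rightarrow> real)" where
  "tensor x t = (\<lambda>j k. x $ j * t $ k)"

definition alpha_A :: "('n \<Rightarrow> 'n \<Rightarrow> 'm \<Rightarrow> real) \<Rightarrow> ('n \<Rightarrow> 'm \<Rightarrow> real) \<Rightarrow> real" where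
  "alpha_A A y = sqrt (\<Sum>i\<in>UNIV. (\<Sum>j\<in>UNIV. \<Sum>k\<in>UNIV. A i j k * y j k)^2)"

definition beta_AS :: "('n \<Rightarrow> 'n \<Rightarrow> 'm \<Rightarrow> real) \<Rightarrow> (real^'m) set \<Rightarrow> real^'n \<Rightarrow> real" where
  "beta_AS A S x = (\<integral>g. (SUP t\<in>S. \<bar>\<Sum>i\<in>UNIV. \<Sum>j\<in>UNIV. \<Sum>k\<in>UNIV. A i j k * g $ i * x $ j * t $ k\<bar>)
                     \<partial>(gauss_measure 1))"

definition d_A :: "('n \<Rightarrow> 'n \<Rightarrow> 'm \<Rightarrow> real) \<Rightarrow> ((real^'n) \<times> (real^'m)) \<Rightarrow> ((real^'n) \<times> (real^'m)) \<Rightarrow> real" where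
  "d_A A p q = alpha_A A (\<lambda>j k. tensor (fst p) (snd p) j k - tensor (fst q) (snd q) j k)"

definition ball_dA :: "('n \<Rightarrow> 'n \<Rightarrow> 'm \<Rightarrow> real) \<Rightarrow> (real^'m) set \<Rightarrow> ((real^'n) \<times> (real^'m)) \<Rightarrow> real
     \<Rightarrow> ((real^'n) \<times> (real^'m)) set" where
  "ball_dA A S p r = {q. snd q \<in> S \<and> d_A A p q \<le> r}"

definition mu_eps :: "real \<Rightarrow> (real^'n \<Rightarrow> (real^'m) set) \<Rightarrow> ((real^'n) \<times> (real^'m)) set \<Rightarrow> ennreal" where
  "mu_eps eps Sx D = (\<integral>\<^sup>+ x. (\<Sum>t\<in>Sx x. indicator D (x, t)) \<partial>(gauss_measure eps))"

end

theory Submission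
  imports Defs
begin

(* Let K be the set of z with alpha_A (tensor z t) <= 4 eps E alpha_A (tensor G t) and
   beta z <= 4 eps E beta G.  Both functions are nonnegative and absolutely homogeneous, so after
   rescaling eps G to G, Markov's inequality gives gamma_eps K >= 1/2.  K is symmetric, and averaging
   the Gaussian density at z + x and z - x cancels the cross term exp (+-<x,z>/eps^2); hence
   gamma_eps (x + K) >= exp (-|x|^2/(2 eps^2)) gamma_eps K.  Finally, for y in x + K every t' in
   S_{y,eps} with alpha_A (tensor y (t - t')) <= eps beta y puts (y, t') into the ball, because
   d_A ((x,t),(y,t')) <= alpha_A (tensor (y - x) t) + alpha_A (tensor y (t - t')) and beta is
   subadditive. *)

lemma gauss_density_nonneg: "0 < e \<Longrightarrow> 0 \<le> gauss_density e x"
  unfolding gauss_density_def by simp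

lemma borel_measurable_gauss_density[measurable]: "gauss_density e \<in> borel_measurable borel"
  unfolding gauss_density_def by measurable

lemma sets_gauss_measure[simp, measurable_cong]: "sets (gauss_measure e) = sets borel"
  unfolding gauss_measure_def by simp

lemma space_gauss_measure[simp]: "space (gauss_measure e) = UNIV"
  unfolding gauss_measure_def by simp

lemma measurable_gauss_measure: "measurable (gauss_measure e) = measurable borel"
  by (intro ext measurable_cong_sets) auto

lemma emeasure_gauss_measure:
  "A \<in> sets borel \<Longrightarrow>
    emeasure (gauss_measure e) A = (\<integral>\<^sup>+y. ennreal (gauss_density e y) * indicator A y \<partial>lborel)"
  unfolding gauss_measure_def by (simp add: emeasure_density nn_integral_set_ennreal)

lemma gauss_density_eq_prod_normal_density:
  assumes "0 < e"
  shows "gauss_density e (x::real^'n) = (\<Prod>b\<in>Basis. normal_density 0 e (x \<bullet> b))"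
proof -
  have "(\<Prod>b\<in>Basis. normal_density 0 e (x \<bullet> b))
      = (\<Prod>b\<in>(Basis::(real^'n) set). 1 / (sqrt (2 * pi) * e) * exp (- ((x \<bullet> b)^2) / (2 * e^2)))"
    using assms by (simp add: normal_density_def real_sqrt_mult)
  also have "\<dots> = (1 / (sqrt (2 * pi) * e)) ^ CARD('n) *
      exp (\<Sum>b\<in>(Basis::(real^'n) set). - ((x \<bullet> b)^2) / (2 * e^2))"
    by (subst prod.distrib) (simp add: exp_sum)
  also have "(\<Sum>b\<in>(Basis::(real^'n) set). - ((x \<bullet> b)^2) / (2 * e^2)) = - ((norm x)^2) / (2 * e^2)"
  proof -
    have "(norm x)^2 = (\<Sum>b\<in>(Basis::(real^'n) set). (x \<bullet> b)^2)"
      unfolding power2_norm_eq_inner by (subst euclidean_inner) (simp add: power2_eq_square)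
    then show ?thesis
      by (simp add: sum_divide_distrib[symmetric] sum_negf)
  qed
  finally show ?thesis
    unfolding gauss_density_def by simp
qed

lemma prob_space_gauss_measure:
  assumes e: "0 < e"
  shows "prob_space (gauss_measure e :: (real^'n) measure)"
proof (rule prob_spaceI)
  have "emeasure (gauss_measure e) (space (gauss_measure e :: (real^'n) measure))
      = (\<integral>\<^sup>+x. ennreal (\<Prod>b\<in>Basis. normal_density 0 e (x \<bullet> b)) \<partial>(lborel :: (real^'n) measure))"
    using e by (simp add: emeasure_gauss_measure gauss_density_eq_prod_normal_density)
  also have "\<dots> = (\<integral>\<^sup>+x. (\<Prod>b\<in>Basis. ennreal (normal_density 0 e ((x::real^'n) \<bullet> b))) \<partial>lborel)"
    by (simp add: prod_ennreal normal_density_nonneg)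
  also have "\<dots> = (\<Prod>b\<in>(Basis :: (real^'n) set). \<integral>\<^sup>+y. ennreal (normal_density 0 e y) \<partial>lborel)"
    by (rule nn_integral_lborel_prod) auto
  also have "\<dots> = 1"
    using e by (simp add: nn_integral_eq_integral integrable_normal_density integral_normal_density)
  finally show "emeasure (gauss_measure e) (space (gauss_measure e :: (real^'n) measure)) = 1" .
qed

lemma integrable_gauss_measure_abs_inner_Basis:
  assumes e: "0 < e" and b: "(b::real^'n) \<in> Basis"
  shows "integrable (gauss_measure e) (\<lambda>g. \<bar>g \<bullet> b\<bar>)"
proof -
  \<comment> \<open>The density factorises over the coordinates, so the integral is a product of
    one-dimensional moments.\<close>
  define f where "f b' y = ennreal (normal_density 0 e y * (if b' = b then \<bar>y\<bar> else 1))" for b' y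
  have factor_finite: "(\<integral>\<^sup>+y. f b' y \<partial>lborel) < \<infinity>" for b'
  proof -
    have "integrable lborel (\<lambda>y. normal_density 0 e y * (if b' = b then \<bar>y\<bar> else 1))"
      using integrable_normal_moment_abs[OF e, of 0 1] integrable_normal_density[OF e, of 0]
      by (cases "b' = b") simp_all
    then show ?thesis
      by (simp add: f_def integrable_iff_bounded normal_density_nonneg)
  qed
  have "gauss_density e g * \<bar>g \<bullet> b\<bar>
      = (\<Prod>b'\<in>Basis. normal_density 0 e (g \<bullet> b') * (if b' = b then \<bar>g \<bullet> b'\<bar> else 1))" for g
    using b by (simp add: prod.distrib gauss_density_eq_prod_normal_density[OF e] prod.delta)
  then have "ennreal (gauss_density e g) * ennreal \<bar>g \<bullet> b\<bar> = (\<Prod>b'\<in>Basis. f b' (g \<bullet> b'))" for g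
    unfolding f_def using e
    by (subst prod_ennreal) (auto simp: ennreal_mult[symmetric] gauss_density_nonneg normal_density_nonneg)
  then have "(\<integral>\<^sup>+g. ennreal \<bar>g \<bullet> b\<bar> \<partial>gauss_measure e)
      = (\<integral>\<^sup>+g. (\<Prod>b'\<in>Basis. f b' (g \<bullet> b')) \<partial>lborel)"
    unfolding gauss_measure_def by (subst nn_integral_density) auto
  also have "\<dots> = (\<Prod>b'\<in>Basis. \<integral>\<^sup>+y. f b' y \<partial>lborel)"
    by (rule nn_integral_lborel_prod) (auto simp: f_def)
  also have "\<dots> < \<infinity>"
    using factor_finite by (simp add: less_top[symmetric] ennreal_prod_eq_top)
  finally show ?thesis
    by (simp add: integrable_iff_bounded measurable_gauss_measure)
qed

lemma integrable_gauss_measure_norm: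
  "0 < e \<Longrightarrow> integrable (gauss_measure e :: (real^'n) measure) norm"
  by (rule Bochner_Integration.integrable_bound[where f = "\<lambda>g::real^'n. \<Sum>b\<in>Basis. \<bar>g \<bullet> b\<bar>"])
     (auto intro!: integrable_gauss_measure_abs_inner_Basis norm_le_l1
       simp: measurable_gauss_measure sum_nonneg)

lemma integrable_gauss_measure_linear_bound:
  fixes f :: "real^'n \<Rightarrow> real"
  assumes "0 < e" and "f \<in> borel_measurable borel" and "\<And>g. \<bar>f g\<bar> \<le> C * norm g"
  shows "integrable (gauss_measure e) f"
  by (rule Bochner_Integration.integrable_bound[where f = "\<lambda>g::real^'n. C * norm g"])
     (use assms in \<open>auto intro!: AE_I2 intro: integrable_gauss_measure_norm order.trans[OF _ abs_ge_self]
        simp: measurable_gauss_measure\<close>)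

lemma nn_integral_lborel_affine:
  fixes F :: "'a::euclidean_space \<Rightarrow> ennreal"
  assumes c: "c \<noteq> 0" and [measurable]: "F \<in> borel_measurable borel"
  shows "(\<integral>\<^sup>+y. F y \<partial>lborel) = ennreal (\<bar>c\<bar> ^ DIM('a)) * (\<integral>\<^sup>+x. F (t + c *\<^sub>R x) \<partial>lborel)"
  by (subst lborel_affine[OF c, of t]) (simp add: nn_integral_density nn_integral_distr nn_integral_cmult)

lemma gauss_density_scaleR:
  assumes e: "0 < e"
  shows "e ^ CARD('n) * gauss_density e (e *\<^sub>R x) = gauss_density 1 (x::real^'n)"
proof -
  have normalisation: "e ^ CARD('n) * (1 / (sqrt (2 * pi) * e)) ^ CARD('n) = (1 / sqrt (2 * pi)) ^ CARD('n)"
    using e by (simp add: power_mult_distrib[symmetric])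
  have exponent: "(norm (e *\<^sub>R x))^2 / (2 * e^2) = (norm x)^2 / 2"
    using e by (simp add: power_mult_distrib)
  have "e ^ CARD('n) * gauss_density e (e *\<^sub>R x)
      = (e ^ CARD('n) * (1 / (sqrt (2 * pi) * e)) ^ CARD('n)) * exp (- ((norm (e *\<^sub>R x))^2 / (2 * e^2)))"
    by (simp only: gauss_density_def mult.assoc minus_divide_left)
  also have "\<dots> = gauss_density 1 x"
    unfolding normalisation exponent gauss_density_def by simp
  finally show ?thesis .
qed

lemma emeasure_gauss_measure_scaleR:
  fixes A :: "(real^'n) set"
  assumes e: "0 < e" and A[measurable]: "A \<in> sets borel"
  shows "emeasure (gauss_measure e) A = emeasure (gauss_measure 1) ((\<lambda>g. e *\<^sub>R g) -` A)"
proof -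
  have density: "ennreal (e ^ CARD('n)) * ennreal (gauss_density e (e *\<^sub>R x)) = ennreal (gauss_density 1 x)"
    for x :: "real^'n"
    using e by (subst ennreal_mult[symmetric]) (simp_all add: gauss_density_nonneg gauss_density_scaleR)
  have "emeasure (gauss_measure e) A
      = ennreal (e ^ CARD('n)) * (\<integral>\<^sup>+x. ennreal (gauss_density e (e *\<^sub>R x)) * indicator A (e *\<^sub>R x) \<partial>lborel)"
    unfolding emeasure_gauss_measure[OF A]
    using nn_integral_lborel_affine[where c = e and t = 0 and F = "\<lambda>y. ennreal (gauss_density e y) * indicator A y"] e
    by simp
  also have "\<dots> = (\<integral>\<^sup>+x. ennreal (e ^ CARD('n))
      * (ennreal (gauss_density e (e *\<^sub>R x)) * indicator A (e *\<^sub>R x)) \<partial>lborel)"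
    by (rule nn_integral_cmult[symmetric]) measurable
  also have "\<dots> = (\<integral>\<^sup>+x. ennreal (gauss_density 1 x) * indicator ((\<lambda>g. e *\<^sub>R g) -` A) x \<partial>lborel)"
    by (rule nn_integral_cong) (simp add: density mult.assoc[symmetric] indicator_def)
  also have "\<dots> = emeasure (gauss_measure 1) ((\<lambda>g. e *\<^sub>R g) -` A)"
    by (rule emeasure_gauss_measure[symmetric], rule measurable_sets_borel[OF _ A]) simp
  finally show ?thesis .
qed

lemma gauss_density_add:
  "gauss_density e (z + y)
    = exp (- ((norm y)^2) / (2 * e^2)) * gauss_density e z * exp (- (y \<bullet> z) / e^2)"
proof (cases "e = 0")
  case False
  have exponent: "- ((norm (z + y))^2) / (2 * e^2)
      = - ((norm y)^2) / (2 * e^2) + - ((norm z)^2) / (2 * e^2) + - (y \<bullet> z) / e^2"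
    using False by (simp add: power2_norm_eq_inner inner_add inner_commute add_divide_distrib diff_divide_distrib)
  show ?thesis
    unfolding gauss_density_def exponent exp_add by (simp add: mult_ac)
qed (simp add: gauss_density_def)

lemma gauss_density_translate_average:
  assumes "0 < e"
  shows "2 * exp (- ((norm x)^2) / (2 * e^2)) * gauss_density e z
    \<le> gauss_density e (z + x) + gauss_density e (z - x)"
proof -
  define c where "c = exp (- ((norm x)^2) / (2 * e^2)) * gauss_density e z"
  define a where "a = (x \<bullet> z) / e^2"
  have plus: "gauss_density e (z + x) = c * exp (- a)"
    using gauss_density_add[of e z x] by (simp add: c_def a_def)
  have minus: "gauss_density e (z - x) = c * exp a"
    using gauss_density_add[of e z "- x"] by (simp add: c_def a_def)
  have "2 \<le> exp a + exp (- a)"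
    using exp_ge_add_one_self[of a] exp_ge_add_one_self[of "- a"] by linarith
  moreover have "0 \<le> c"
    using assms by (simp add: c_def gauss_density_nonneg)
  ultimately have "c * 2 \<le> c * (exp a + exp (- a))"
    by (intro mult_left_mono)
  then show ?thesis
    unfolding plus minus by (simp add: c_def algebra_simps)
qed

lemma emeasure_gauss_measure_translate:
  fixes K :: "(real^'n) set"
  assumes [measurable]: "K \<in> sets borel"
  shows "emeasure (gauss_measure e) {y. y - x \<in> K}
    = (\<integral>\<^sup>+z. ennreal (gauss_density e (z + x)) * indicator K z \<partial>lborel)"
proof -
  have "emeasure (gauss_measure e) {y. y - x \<in> K}
      = (\<integral>\<^sup>+y. ennreal (gauss_density e y) * indicator {y. y - x \<in> K} y \<partial>lborel)"
    by (rule emeasure_gauss_measure) measurable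
  also have "\<dots> = ennreal (\<bar>1\<bar> ^ DIM(real^'n)) * (\<integral>\<^sup>+z. ennreal (gauss_density e (x + 1 *\<^sub>R z))
      * indicator {y. y - x \<in> K} (x + 1 *\<^sub>R z) \<partial>lborel)"
    by (rule nn_integral_lborel_affine) simp_all
  finally show ?thesis
    by (simp add: add.commute indicator_def)
qed

lemma emeasure_gauss_measure_translate_symmetric:
  fixes K :: "(real^'n) set"
  assumes [measurable]: "K \<in> sets borel" and symmetric: "\<And>z. z \<in> K \<Longrightarrow> - z \<in> K"
  shows "emeasure (gauss_measure e) {y. y - x \<in> K}
    = (\<integral>\<^sup>+z. ennreal (gauss_density e (z - x)) * indicator K z \<partial>lborel)"
proof -
  have reflect: "ennreal (gauss_density e (x + (-1) *\<^sub>R z)) * indicator {y. y - x \<in> K} (x + (-1) *\<^sub>R z)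
      = ennreal (gauss_density e (z - x)) * indicator K z" for z
  proof -
    have "gauss_density e (x - z) = gauss_density e (z - x)"
      unfolding gauss_density_def by (simp add: norm_minus_commute)
    moreover have "(- z \<in> K) = (z \<in> K)"
      using symmetric[of z] symmetric[of "- z"] by auto
    ultimately show ?thesis
      by (simp add: indicator_def)
  qed
  have "emeasure (gauss_measure e) {y. y - x \<in> K}
      = (\<integral>\<^sup>+y. ennreal (gauss_density e y) * indicator {y. y - x \<in> K} y \<partial>lborel)"
    by (rule emeasure_gauss_measure) measurable
  also have "\<dots> = ennreal (\<bar>-1\<bar> ^ DIM(real^'n)) * (\<integral>\<^sup>+z. ennreal (gauss_density e (x + (-1) *\<^sub>R z))
      * indicator {y. y - x \<in> K} (x + (-1) *\<^sub>R z) \<partial>lborel)"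
    by (rule nn_integral_lborel_affine) simp_all
  finally show ?thesis
    by (simp only: reflect) simp
qed

lemma emeasure_gauss_measure_translate_ge:
  fixes K :: "(real^'n) set"
  assumes e: "0 < e" and K[measurable]: "K \<in> sets borel" and symmetric: "\<And>z. z \<in> K \<Longrightarrow> - z \<in> K"
  shows "ennreal (exp (- ((norm x)^2) / (2 * e^2))) * emeasure (gauss_measure e) K
    \<le> emeasure (gauss_measure e) {y. y - x \<in> K}"
proof -
  define d :: "real^'n \<Rightarrow> real" where "d = gauss_density e"
  define c where "c = exp (- ((norm x)^2) / (2 * e^2))"
  define L where "L = emeasure (gauss_measure e) {y. y - x \<in> K}"
  have d_nonneg: "0 \<le> d z" for z
    unfolding d_def using e by (rule gauss_density_nonneg)
  have pointwise: "ennreal (2 * c) * (ennreal (d z) * indicator K z)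
      \<le> ennreal (d (z + x)) * indicator K z + ennreal (d (z - x)) * indicator K z" for z
  proof (cases "z \<in> K")
    case True
    have "ennreal (2 * c) * ennreal (d z) = ennreal (2 * c * d z)"
      by (simp add: c_def d_nonneg ennreal_mult)
    also have "\<dots> \<le> ennreal (d (z + x) + d (z - x))"
      using gauss_density_translate_average[OF e, of x z] by (intro ennreal_leI) (simp add: c_def d_def)
    also have "\<dots> = ennreal (d (z + x)) + ennreal (d (z - x))"
      by (simp add: d_nonneg)
    finally show ?thesis
      using True by (simp add: mult.assoc)
  qed simp
  have "ennreal 2 * (ennreal c * emeasure (gauss_measure e) K)
      = ennreal (2 * c) * (\<integral>\<^sup>+z. ennreal (d z) * indicator K z \<partial>lborel)"
    unfolding emeasure_gauss_measure[OF K] d_def by (simp add: c_def ennreal_mult mult.assoc)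
  also have "\<dots> = (\<integral>\<^sup>+z. ennreal (2 * c) * (ennreal (d z) * indicator K z) \<partial>lborel)"
    by (rule nn_integral_cmult[symmetric]) (simp add: d_def)
  also have "\<dots> \<le> (\<integral>\<^sup>+z. ennreal (d (z + x)) * indicator K z + ennreal (d (z - x)) * indicator K z \<partial>lborel)"
    by (rule nn_integral_mono) (rule pointwise)
  also have "\<dots> = (\<integral>\<^sup>+z. ennreal (d (z + x)) * indicator K z \<partial>lborel)
      + (\<integral>\<^sup>+z. ennreal (d (z - x)) * indicator K z \<partial>lborel)"
    by (rule nn_integral_add) (simp_all add: d_def)
  also have "\<dots> = L + L"
    unfolding L_def d_def
    by (simp only: emeasure_gauss_measure_translate[OF K, symmetric]
        emeasure_gauss_measure_translate_symmetric[OF K symmetric, symmetric])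
  finally have "ennreal 2 * (ennreal c * emeasure (gauss_measure e) K) \<le> ennreal 2 * L"
    by (simp add: mult_2)
  then show ?thesis
    unfolding c_def L_def by (simp add: ennreal_mult_le_mult_iff)
qed

lemma emeasure_gauss_measure_translate_ge_half:
  fixes K :: "(real^'n) set"
  assumes e: "0 < e" and K: "K \<in> sets borel" "\<And>z. z \<in> K \<Longrightarrow> - z \<in> K"
    and half: "ennreal (1 / 2) \<le> emeasure (gauss_measure e) K" and x: "norm x \<le> 1"
  shows "ennreal (1 / 2 * exp (- (1 / e^2) / 2)) \<le> emeasure (gauss_measure e) {y. y - x \<in> K}"
proof -
  have "(norm x)^2 / (2 * e^2) \<le> 1 / (2 * e^2)"
    using x by (intro divide_right_mono power_le_one) auto
  then have exp_le: "exp (- (1 / e^2) / 2) \<le> exp (- ((norm x)^2) / (2 * e^2))"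
    by simp
  have "ennreal (1 / 2 * exp (- (1 / e^2) / 2)) = ennreal (exp (- (1 / e^2) / 2)) * ennreal (1 / 2)"
    by (subst ennreal_mult) (simp_all add: mult.commute)
  also have "\<dots> \<le> ennreal (exp (- ((norm x)^2) / (2 * e^2))) * emeasure (gauss_measure e) K"
    using exp_le half by (intro mult_mono ennreal_leI) simp_all
  also have "\<dots> \<le> emeasure (gauss_measure e) {y. y - x \<in> K}"
    using e K by (rule emeasure_gauss_measure_translate_ge)
  finally show ?thesis .
qed

lemma (in prob_space) prob_gt_mult_expectation_le:
  fixes u :: "'a \<Rightarrow> real"
  assumes u: "integrable M u" and nonneg: "\<And>x. x \<in> space M \<Longrightarrow> 0 \<le> u x" and c: "0 < c"
  shows "prob {x \<in> space M. c * expectation u < u x} \<le> 1 / c"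
proof (cases "expectation u = 0")
  case True
  have "AE x in M. u x = 0"
    using True integral_nonneg_eq_0_iff_AE[OF u] nonneg by auto
  then have "prob {x \<in> space M. c * expectation u < u x} = 0"
    using True u by (subst prob_eq_0) (auto elim: AE_mp)
  then show ?thesis
    using c by simp
next
  case False
  then have pos: "0 < expectation u"
    using integral_nonneg_AE[of u M] nonneg by fastforce
  have [measurable]: "u \<in> borel_measurable M"
    using u by (rule borel_measurable_integrable)
  have "prob {x \<in> space M. c * expectation u < u x} \<le> prob {x \<in> space M. c * expectation u \<le> u x}"
    by (intro finite_measure_mono) auto
  also have "\<dots> \<le> expectation u / (c * expectation u)"
    using u nonneg c pos by (intro integral_Markov_inequality_measure[where A = "space M"]) auto
  also have "\<dots> = 1 / c"
    using pos by simp
  finally show ?thesis .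
qed

lemma (in prob_space) prob_both_le_four_expectation_ge_half:
  fixes u v :: "'a \<Rightarrow> real"
  assumes "integrable M u" "\<And>x. x \<in> space M \<Longrightarrow> 0 \<le> u x"
    and "integrable M v" "\<And>x. x \<in> space M \<Longrightarrow> 0 \<le> v x"
  shows "1 / 2 \<le> prob {x \<in> space M. u x \<le> 4 * expectation u \<and> v x \<le> 4 * expectation v}"
proof -
  have [measurable]: "u \<in> borel_measurable M" "v \<in> borel_measurable M"
    using assms by (simp_all add: borel_measurable_integrable)
  let ?U = "{x \<in> space M. 4 * expectation u < u x}" and ?V = "{x \<in> space M. 4 * expectation v < v x}"
  have "space M - {x \<in> space M. u x \<le> 4 * expectation u \<and> v x \<le> 4 * expectation v} = ?U \<union> ?V"
    by auto
  moreover have "prob (?U \<union> ?V) \<le> prob ?U + prob ?V"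
    by (rule measure_subadditive) simp_all
  moreover have "prob ?U \<le> 1 / 4"
    by (rule prob_gt_mult_expectation_le) (use assms in auto)
  moreover have "prob ?V \<le> 1 / 4"
    by (rule prob_gt_mult_expectation_le) (use assms in auto)
  ultimately show ?thesis
    using prob_compl[of "{x \<in> space M. u x \<le> 4 * expectation u \<and> v x \<le> 4 * expectation v}"] by simp
qed

lemma emeasure_gauss_measure_sublevel_ge_half:
  fixes u v :: "real^'n \<Rightarrow> real"
  assumes e: "0 < e"
    and u: "integrable (gauss_measure 1) u" "\<And>z. 0 \<le> u z" "\<And>z. u (e *\<^sub>R z) = e * u z"
    and v: "integrable (gauss_measure 1) v" "\<And>z. 0 \<le> v z" "\<And>z. v (e *\<^sub>R z) = e * v z"
  shows "ennreal (1 / 2) \<le> emeasure (gauss_measure e)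
    {z. u z \<le> 4 * e * (\<integral>g. u g \<partial>gauss_measure 1) \<and> v z \<le> 4 * e * (\<integral>g. v g \<partial>gauss_measure 1)}"
proof -
  interpret gauss: prob_space "gauss_measure 1 :: (real^'n) measure"
    by (rule prob_space_gauss_measure) simp
  have [measurable]: "u \<in> borel_measurable borel" "v \<in> borel_measurable borel"
    using u(1) v(1) by (simp_all add: borel_measurable_integrable flip: measurable_gauss_measure)
  have "(\<lambda>g. e *\<^sub>R g) -` {z. u z \<le> 4 * e * gauss.expectation u \<and> v z \<le> 4 * e * gauss.expectation v}
      = {g \<in> space (gauss_measure 1). u g \<le> 4 * gauss.expectation u \<and> v g \<le> 4 * gauss.expectation v}"
    using e by (auto simp: u(3) v(3))
  moreover have "ennreal (1 / 2) \<le> ennreal (gauss.prob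
      {g \<in> space (gauss_measure 1). u g \<le> 4 * gauss.expectation u \<and> v g \<le> 4 * gauss.expectation v})"
    using u v by (intro ennreal_leI gauss.prob_both_le_four_expectation_ge_half) simp_all
  ultimately show ?thesis
    using e by (simp add: emeasure_gauss_measure_scaleR gauss.emeasure_eq_measure)
qed

lemma emeasure_gauss_measure_le_mu_eps:
  assumes [measurable]: "E \<in> sets borel" and "\<And>y. finite (Sx y)"
    and "\<And>y. y \<in> E \<Longrightarrow> \<exists>t\<in>Sx y. (y, t) \<in> D"
  shows "emeasure (gauss_measure e) E \<le> mu_eps e Sx D"
proof -
  have "indicator E y \<le> (\<Sum>t\<in>Sx y. indicator D (y, t) :: ennreal)" for y
  proof (cases "y \<in> E")
    case True
    then obtain t where "t \<in> Sx y" and "(y, t) \<in> D"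
      using assms(3) by blast
    then have "(indicator D (y, t) :: ennreal) \<le> (\<Sum>t\<in>Sx y. indicator D (y, t))"
      using assms(2) by (intro member_le_sum) simp_all
    then show ?thesis
      using True \<open>(y, t) \<in> D\<close> by simp
  qed simp
  then have "(\<integral>\<^sup>+y. indicator E y \<partial>gauss_measure e) \<le> mu_eps e Sx D"
    unfolding mu_eps_def by (rule nn_integral_mono)
  then show ?thesis
    by simp
qed

definition abs_coeff_sum :: "('n::finite \<Rightarrow> 'n \<Rightarrow> 'm::finite \<Rightarrow> real) \<Rightarrow> real^'m \<Rightarrow> real" where
  "abs_coeff_sum A t = (\<Sum>i\<in>UNIV. \<Sum>j\<in>UNIV. \<Sum>k\<in>UNIV. \<bar>A i j k\<bar> * \<bar>t $ k\<bar>)"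

lemma abs_coeff_sum_nonneg: "0 \<le> abs_coeff_sum A t"
  unfolding abs_coeff_sum_def by (intro sum_nonneg) auto

lemma sum_abs_contraction_le:
  "(\<Sum>i\<in>UNIV. \<bar>\<Sum>j\<in>UNIV. \<Sum>k\<in>UNIV. A i j k * (x $ j * t $ k)\<bar>) \<le> abs_coeff_sum A t * norm x"
proof -
  have "(\<Sum>i\<in>UNIV. \<bar>\<Sum>j\<in>UNIV. \<Sum>k\<in>UNIV. A i j k * (x $ j * t $ k)\<bar>)
      \<le> (\<Sum>i\<in>UNIV. \<Sum>j\<in>UNIV. \<Sum>k\<in>UNIV. \<bar>A i j k * (x $ j * t $ k)\<bar>)"
    by (intro sum_mono order.trans[OF sum_abs] sum_abs)
  also have "\<dots> \<le> (\<Sum>i\<in>UNIV. \<Sum>j\<in>UNIV. \<Sum>k\<in>UNIV. \<bar>A i j k\<bar> * \<bar>t $ k\<bar> * norm x)"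
  proof (intro sum_mono)
    fix i j k
    have "\<bar>A i j k\<bar> * \<bar>t $ k\<bar> * \<bar>x $ j\<bar> \<le> \<bar>A i j k\<bar> * \<bar>t $ k\<bar> * norm x"
      by (intro mult_left_mono component_le_norm_cart) simp
    then show "\<bar>A i j k * (x $ j * t $ k)\<bar> \<le> \<bar>A i j k\<bar> * \<bar>t $ k\<bar> * norm x"
      by (simp add: abs_mult mult_ac)
  qed
  also have "\<dots> = abs_coeff_sum A t * norm x"
    unfolding abs_coeff_sum_def by (simp add: sum_distrib_right)
  finally show ?thesis .
qed

lemma alpha_A_nonneg: "0 \<le> alpha_A A y"
  unfolding alpha_A_def by (simp add: sum_nonneg)

lemma alpha_A_add_le: "alpha_A A (\<lambda>j k. y j k + y' j k) \<le> alpha_A A y + alpha_A A y'"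
proof -
  have "alpha_A A (\<lambda>j k. y j k + y' j k)
      = L2_set (\<lambda>i. (\<Sum>j\<in>UNIV. \<Sum>k\<in>UNIV. A i j k * y j k)
          + (\<Sum>j\<in>UNIV. \<Sum>k\<in>UNIV. A i j k * y' j k)) UNIV"
    unfolding alpha_A_def L2_set_def by (simp add: algebra_simps sum.distrib)
  also have "\<dots> \<le> alpha_A A y + alpha_A A y'"
    unfolding alpha_A_def L2_set_def[symmetric] by (rule L2_set_triangle_ineq)
  finally show ?thesis .
qed

lemma alpha_A_tensor_scaleR: "alpha_A A (tensor (c *\<^sub>R x) t) = \<bar>c\<bar> * alpha_A A (tensor x t)"
proof -
  have "(\<Sum>i\<in>UNIV. (\<Sum>j\<in>UNIV. \<Sum>k\<in>UNIV. A i j k * ((c *\<^sub>R x) $ j * t $ k))^2)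
      = c^2 * (\<Sum>i\<in>UNIV. (\<Sum>j\<in>UNIV. \<Sum>k\<in>UNIV. A i j k * (x $ j * t $ k))^2)"
    by (simp add: sum_distrib_left power_mult_distrib[symmetric] algebra_simps)
  then show ?thesis
    unfolding alpha_A_def tensor_def by (simp add: real_sqrt_mult)
qed

lemma alpha_A_tensor_le: "alpha_A A (tensor x t) \<le> abs_coeff_sum A t * norm x"
proof -
  have "alpha_A A (tensor x t) = L2_set (\<lambda>i. \<Sum>j\<in>UNIV. \<Sum>k\<in>UNIV. A i j k * (x $ j * t $ k)) UNIV"
    unfolding alpha_A_def tensor_def L2_set_def ..
  also have "\<dots> \<le> (\<Sum>i\<in>UNIV. \<bar>\<Sum>j\<in>UNIV. \<Sum>k\<in>UNIV. A i j k * (x $ j * t $ k)\<bar>)"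
    by (rule L2_set_le_sum_abs)
  also have "\<dots> \<le> abs_coeff_sum A t * norm x"
    by (rule sum_abs_contraction_le)
  finally show ?thesis .
qed

lemma borel_measurable_alpha_A_tensor[measurable]:
  "(\<lambda>x. alpha_A A (tensor x t)) \<in> borel_measurable borel"
  unfolding alpha_A_def tensor_def by measurable

lemma integrable_alpha_A_tensor:
  "0 < e \<Longrightarrow> integrable (gauss_measure e) (\<lambda>g. alpha_A A (tensor g t))"
  by (rule integrable_gauss_measure_linear_bound[where C = "abs_coeff_sum A t"])
     (simp_all add: alpha_A_tensor_le alpha_A_nonneg)

lemma d_A_le:
  "d_A A (x, t) (y, t') \<le> alpha_A A (tensor (y - x) t) + alpha_A A (tensor y (t - t'))"
proof -
  have "d_A A (x, t) (y, t') = alpha_A A (\<lambda>j k. tensor ((-1) *\<^sub>R (y - x)) t j k + tensor y (t - t') j k)"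
    unfolding d_A_def by (simp add: tensor_def algebra_simps)
  also have "\<dots> \<le> alpha_A A (tensor ((-1) *\<^sub>R (y - x)) t) + alpha_A A (tensor y (t - t'))"
    by (rule alpha_A_add_le)
  finally show ?thesis
    using alpha_A_tensor_scaleR[of A "-1" "y - x" t] by simp
qed

definition trilinear_form ::
    "('n::finite \<Rightarrow> 'n \<Rightarrow> 'm::finite \<Rightarrow> real) \<Rightarrow> real^'n \<Rightarrow> real^'n \<Rightarrow> real^'m \<Rightarrow> real" where
  "trilinear_form A g x t = (\<Sum>i\<in>UNIV. \<Sum>j\<in>UNIV. \<Sum>k\<in>UNIV. A i j k * g $ i * x $ j * t $ k)"

lemma trilinear_form_add: "trilinear_form A g (x + y) t = trilinear_form A g x t + trilinear_form A g y t"
  unfolding trilinear_form_def by (simp add: algebra_simps sum.distrib)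

lemma trilinear_form_scaleR: "trilinear_form A g (c *\<^sub>R x) t = c * trilinear_form A g x t"
  unfolding trilinear_form_def by (simp add: sum_distrib_left algebra_simps)

lemma abs_trilinear_form_le: "\<bar>trilinear_form A g x t\<bar> \<le> abs_coeff_sum A t * (norm g * norm x)"
proof -
  have "\<bar>trilinear_form A g x t\<bar> = \<bar>\<Sum>i\<in>UNIV. g $ i * (\<Sum>j\<in>UNIV. \<Sum>k\<in>UNIV. A i j k * (x $ j * t $ k))\<bar>"
    unfolding trilinear_form_def by (simp add: sum_distrib_left mult_ac)
  also have "\<dots> \<le> (\<Sum>i\<in>UNIV. norm g * \<bar>\<Sum>j\<in>UNIV. \<Sum>k\<in>UNIV. A i j k * (x $ j * t $ k)\<bar>)"
    by (intro order.trans[OF sum_abs] sum_mono) (simp add: abs_mult mult_right_mono component_le_norm_cart)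
  also have "\<dots> \<le> norm g * (abs_coeff_sum A t * norm x)"
    by (simp add: sum_distrib_left[symmetric] mult_left_mono sum_abs_contraction_le)
  finally show ?thesis
    by (simp add: mult_ac)
qed

lemma borel_measurable_vec_nth[measurable (raw)]:
  "f \<in> borel_measurable M \<Longrightarrow> (\<lambda>x. (f x :: real^'n) $ i) \<in> borel_measurable M"
  using measurable_compose[OF _ borel_measurable_nth] .

lemma borel_measurable_trilinear_form[measurable]:
  "(\<lambda>(x, g). trilinear_form A g x t) \<in> borel_measurable (borel \<Otimes>\<^sub>M borel)"
  unfolding trilinear_form_def by measurable

definition sup_trilinear_form ::
    "('n::finite \<Rightarrow> 'n \<Rightarrow> 'm::finite \<Rightarrow> real) \<Rightarrow> (real^'m) set \<Rightarrow> real^'n \<Rightarrow> real^'n \<Rightarrow> real" where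
  "sup_trilinear_form A S g x = (SUP t\<in>S. \<bar>trilinear_form A g x t\<bar>)"

lemma beta_AS_eq_integral: "beta_AS A S x = (\<integral>g. sup_trilinear_form A S g x \<partial>gauss_measure 1)"
  unfolding beta_AS_def sup_trilinear_form_def trilinear_form_def ..

context
  fixes A :: "'n::finite \<Rightarrow> 'n \<Rightarrow> 'm::finite \<Rightarrow> real" and S :: "(real^'m) set"
  assumes finite: "finite S" and nonempty: "S \<noteq> {}"
begin

lemma sup_trilinear_form_eq_Max:
  "sup_trilinear_form A S g x = Max ((\<lambda>t. \<bar>trilinear_form A g x t\<bar>) ` S)"
  unfolding sup_trilinear_form_def using finite nonempty by (simp add: cSup_eq_Max)

lemma abs_trilinear_form_le_sup: "t \<in> S \<Longrightarrow> \<bar>trilinear_form A g x t\<bar> \<le> sup_trilinear_form A S g x"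
  unfolding sup_trilinear_form_eq_Max using finite by simp

lemma sup_trilinear_form_le_iff:
  "sup_trilinear_form A S g x \<le> B \<longleftrightarrow> (\<forall>t\<in>S. \<bar>trilinear_form A g x t\<bar> \<le> B)"
  unfolding sup_trilinear_form_eq_Max using finite nonempty by simp

lemma sup_trilinear_form_nonneg: "0 \<le> sup_trilinear_form A S g x"
  using nonempty abs_trilinear_form_le_sup by (meson abs_ge_zero all_not_in_conv order.trans)

lemma sup_trilinear_form_add_le:
  "sup_trilinear_form A S g (x + y) \<le> sup_trilinear_form A S g x + sup_trilinear_form A S g y"
  unfolding sup_trilinear_form_le_iff trilinear_form_add
  using abs_trilinear_form_le_sup by (smt (verit))

lemma sup_trilinear_form_scaleR: "sup_trilinear_form A S g (c *\<^sub>R x) = \<bar>c\<bar> * sup_trilinear_form A S g x"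
proof -
  have "mono (\<lambda>y. \<bar>c\<bar> * y)"
    by (simp add: mono_def mult_left_mono)
  then show ?thesis
    unfolding sup_trilinear_form_eq_Max trilinear_form_scaleR abs_mult
    using finite nonempty by (simp add: mono_Max_commute image_image)
qed

lemma sup_trilinear_form_le:
  "sup_trilinear_form A S g x \<le> (\<Sum>s\<in>S. abs_coeff_sum A s) * (norm g * norm x)"
  unfolding sup_trilinear_form_le_iff
proof
  fix t assume "t \<in> S"
  then have "abs_coeff_sum A t \<le> (\<Sum>s\<in>S. abs_coeff_sum A s)"
    using finite by (intro member_le_sum) (simp_all add: abs_coeff_sum_nonneg)
  then show "\<bar>trilinear_form A g x t\<bar> \<le> (\<Sum>s\<in>S. abs_coeff_sum A s) * (norm g * norm x)"
    using abs_trilinear_form_le[of A g x t] by (meson mult_right_mono norm_ge_zero zero_le_mult_iff order.trans)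
qed

lemma borel_measurable_sup_trilinear_form[measurable]:
  "(\<lambda>(x, g). sup_trilinear_form A S g x) \<in> borel_measurable (borel \<Otimes>\<^sub>M borel)"
  unfolding sup_trilinear_form_eq_Max using finite by measurable

lemma integrable_sup_trilinear_form: "integrable (gauss_measure 1) (\<lambda>g. sup_trilinear_form A S g x)"
proof (rule integrable_gauss_measure_linear_bound[where C = "(\<Sum>s\<in>S. abs_coeff_sum A s) * norm x"])
  show "\<bar>sup_trilinear_form A S g x\<bar> \<le> (\<Sum>s\<in>S. abs_coeff_sum A s) * norm x * norm g" for g
    using sup_trilinear_form_le[of g x] sup_trilinear_form_nonneg[of g x] by (simp add: mult_ac)
qed simp_all

lemma beta_AS_nonneg: "0 \<le> beta_AS A S x"
  unfolding beta_AS_eq_integral by (rule integral_nonneg_AE) (simp add: sup_trilinear_form_nonneg)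

lemma beta_AS_add_le: "beta_AS A S (x + y) \<le> beta_AS A S x + beta_AS A S y"
proof -
  have "beta_AS A S (x + y)
      \<le> (\<integral>g. sup_trilinear_form A S g x + sup_trilinear_form A S g y \<partial>gauss_measure 1)"
    unfolding beta_AS_eq_integral
    by (rule Bochner_Integration.integral_mono)
       (simp_all add: integrable_sup_trilinear_form sup_trilinear_form_add_le)
  also have "\<dots> = beta_AS A S x + beta_AS A S y"
    unfolding beta_AS_eq_integral by (intro Bochner_Integration.integral_add integrable_sup_trilinear_form)
  finally show ?thesis .
qed

lemma beta_AS_scaleR: "beta_AS A S (c *\<^sub>R x) = \<bar>c\<bar> * beta_AS A S x"
  unfolding beta_AS_eq_integral sup_trilinear_form_scaleR by simp

lemma beta_AS_le:
  "beta_AS A S x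
    \<le> (\<Sum>s\<in>S. abs_coeff_sum A s) * (\<integral>g. norm g \<partial>(gauss_measure 1 :: (real^'n) measure)) * norm x"
proof -
  have "beta_AS A S x
      \<le> (\<integral>g. (\<Sum>s\<in>S. abs_coeff_sum A s) * norm x * norm g \<partial>(gauss_measure 1 :: (real^'n) measure))"
    unfolding beta_AS_eq_integral
  proof (rule Bochner_Integration.integral_mono)
    show "sup_trilinear_form A S g x \<le> (\<Sum>s\<in>S. abs_coeff_sum A s) * norm x * norm g" for g
      using sup_trilinear_form_le[of g x] by (simp add: mult_ac)
  qed (simp_all add: integrable_sup_trilinear_form integrable_gauss_measure_norm)
  then show ?thesis
    by (simp add: mult_ac)
qed

lemma borel_measurable_beta_AS[measurable]: "beta_AS A S \<in> borel_measurable borel"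
proof -
  interpret sigma_finite_measure "gauss_measure 1 :: (real^'n) measure"
    by (intro prob_space_imp_sigma_finite prob_space_gauss_measure) simp
  have "(\<lambda>(x, g). sup_trilinear_form A S g x) \<in> borel_measurable (borel \<Otimes>\<^sub>M gauss_measure 1)"
    by measurable
  then show ?thesis
    unfolding beta_AS_eq_integral[abs_def] by (rule borel_measurable_lebesgue_integral)
qed

lemma integrable_beta_AS: "integrable (gauss_measure 1) (beta_AS A S)"
  by (rule integrable_gauss_measure_linear_bound
        [where C = "(\<Sum>s\<in>S. abs_coeff_sum A s) * (\<integral>g. norm g \<partial>(gauss_measure 1 :: (real^'n) measure))"])
     (simp_all add: beta_AS_nonneg beta_AS_le)

lemma emeasure_gauss_measure_le_mu_eps_ball_dA:
  assumes "\<And>y. Sx y \<subseteq> S" and "0 \<le> eps"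
    and "\<And>y. \<exists>t'\<in>Sx y. alpha_A A (tensor y (t - t')) \<le> eps * beta_AS A S y"
  shows "emeasure (gauss_measure e) {y. alpha_A A (tensor (y - x) t) \<le> a \<and> beta_AS A S (y - x) \<le> b}
    \<le> mu_eps e Sx (ball_dA A S (x, t) (eps * b + eps * beta_AS A S x + a))"
proof (rule emeasure_gauss_measure_le_mu_eps)
  show "finite (Sx y)" for y
    using finite assms(1) by (rule finite_subset[rotated])
  fix y assume y: "y \<in> {y. alpha_A A (tensor (y - x) t) \<le> a \<and> beta_AS A S (y - x) \<le> b}"
  obtain t' where "t' \<in> Sx y" and t': "alpha_A A (tensor y (t - t')) \<le> eps * beta_AS A S y"
    using assms(3) by blast
  have "beta_AS A S y \<le> beta_AS A S x + b"
    using beta_AS_add_le[of x "y - x"] y by simp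
  then have "eps * beta_AS A S y \<le> eps * b + eps * beta_AS A S x"
    using assms(2) by (simp add: mult_left_mono distrib_left[symmetric] add.commute)
  then have "(y, t') \<in> ball_dA A S (x, t) (eps * b + eps * beta_AS A S x + a)"
    using d_A_le[of A x t y t'] y t' \<open>t' \<in> Sx y\<close> assms(1) unfolding ball_dA_def by auto
  with \<open>t' \<in> Sx y\<close> show "\<exists>t'\<in>Sx y. (y, t') \<in> ball_dA A S (x, t) (eps * b + eps * beta_AS A S x + a)"
    by blast
qed (measurable)

end

theorem lemma5p2:
  fixes A :: "'n::finite \<Rightarrow> 'n \<Rightarrow> 'm::finite \<Rightarrow> real"
    and S :: "(real^'m) set"
    and eps :: real
    and Sx :: "real^'n \<Rightarrow> (real^'m) set"
  assumes "finite S" and "S \<noteq> {}" and "eps > 0"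
    and "\<And>x. Sx x \<subseteq> S"
    and "\<And>t. t \<in> S \<Longrightarrow> {x. t \<in> Sx x} \<in> sets borel"
    and "\<And>x t. t \<in> S \<Longrightarrow> \<exists>t'\<in>Sx x.
            alpha_A A (tensor x (t - t')) \<le> eps * beta_AS A S x"
    and "norm x \<le> 1" and "t \<in> S"
  shows "mu_eps eps Sx (ball_dA A S (x, t)
           (4 * eps^2 * (\<integral>g. beta_AS A S g \<partial>(gauss_measure 1))
            + eps * beta_AS A S x
            + 4 * eps * (\<integral>g. alpha_A A (tensor g t) \<partial>(gauss_measure 1))))
         \<ge> ennreal (1/2 * exp (- (1 / eps^2) / 2))"
proof -
  note borel_measurable_beta_AS[OF assms(1,2), measurable]
  define Ea where "Ea = (\<integral>g. alpha_A A (tensor g t) \<partial>(gauss_measure 1 :: (real^'n) measure))"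
  define Eb where "Eb = (\<integral>g. beta_AS A S g \<partial>(gauss_measure 1 :: (real^'n) measure))"
  define K where "K = {z. alpha_A A (tensor z t) \<le> 4 * eps * Ea \<and> beta_AS A S z \<le> 4 * eps * Eb}"
  have K_measurable: "K \<in> sets borel"
    unfolding K_def by measurable
  have K_large: "ennreal (1 / 2) \<le> emeasure (gauss_measure eps) K"
    unfolding K_def Ea_def Eb_def using assms(1-3)
    by (intro emeasure_gauss_measure_sublevel_ge_half)
       (simp_all add: integrable_alpha_A_tensor alpha_A_nonneg alpha_A_tensor_scaleR
         integrable_beta_AS beta_AS_nonneg beta_AS_scaleR)
  have K_symmetric: "- z \<in> K" if "z \<in> K" for z
    using that alpha_A_tensor_scaleR[of A "-1" z t] beta_AS_scaleR[OF assms(1,2), where c = "-1" and x = z]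
    unfolding K_def by simp
  have "ennreal (1 / 2 * exp (- (1 / eps^2) / 2)) \<le> emeasure (gauss_measure eps) {y. y - x \<in> K}"
    using assms(3) K_measurable K_symmetric K_large assms(7)
    by (rule emeasure_gauss_measure_translate_ge_half)
  also have "\<dots> \<le> mu_eps eps Sx (ball_dA A S (x, t) (eps * (4 * eps * Eb) + eps * beta_AS A S x + 4 * eps * Ea))"
    unfolding K_def mem_Collect_eq
    using assms(3,4) assms(6)[OF assms(8)]
    by (intro emeasure_gauss_measure_le_mu_eps_ball_dA[OF assms(1,2)]) simp_all
  finally show ?thesis
    by (simp add: Ea_def Eb_def power2_eq_square mult_ac)
qed

end
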